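(* Let $n>1$ and $k>1$ be integers and let $t_1,\ldots,t_k$ be positive divisors of $n$. Consider the family GRDH with parameters $n,k,t_1,\ldots,t_k$. There exists $\varepsilon<1$ such that GRDH is $\varepsilon$-almost-universal if and only if $n$ is odd and $t_1=\cdots=t_k=1$ (i.e., the keys range over $(\mathbb{Z}_n^* )^k$). Moreover, if $n$ is odd and $t_1=\cdots=t_k=1$, then GRDH is $\frac{1}{p-1}$-almost-universal, where $p$ is the smallest prime divisor of $n$, and this bound is tight: there exist distinct $\mathbf{m},\mathbf{m}'\in\mathbb{Z}_n^k$ with $\Pr_{\mathbf{x}}[\Upsilon_{\mathbf{x}}(\mathbf{m})=\Upsilon_{\mathbf{x}}(\mathbf{m}')]=\frac{1}{p-1}$.
   Context: Let $n>1$, $k\ge1$ be integers and $t_1,\ldots,t_k$ positive divisors of $n$. The family GRDH consists of the functions $\Upsilon_{\mathbf{x}}:\mathbb{Z}_n^k\to\mathbb{Z}_n$, $\Upsilon_{\mathbf{x}}(\mathbf{m})=\sum_{i=1}^k m_ix_i \bmod n$, indexed by keys $\mathbf{x}=\langle x_1,\ldots,x_k\rangle\in\mathbb{Z}_n^k$ satisfying $\gcd(x_i,n)=t_i$ for $1\le i\le k$. When $t_1=\cdots=t_k=1$ (keys in $(\mathbb{Z}_n^* )^k$) the family is called RDH. All probabilities are over a key $\mathbf{x}$ chosen uniformly at random from the set of admissible keys. The family is $\varepsilon$-almost-universal if for all distinct $\mathbf{m},\mathbf{m}'\in\mathbb{Z}_n^k$, $\Pr_{\mathbf{x}}[\Upsilon_{\mathbf{x}}(\mathbf{m})=\Upsilon_{\mathbf{x}}(\mathbf{m}')]\le\varepsilon$.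 *)

theory Defs
  imports Complex_Main "HOL-Computational_Algebra.Primes"
begin

text \<open>Elements of Z_n^k are represented as functions nat => nat whose values at
indices i < k lie in {0..<n} and which vanish at indices i >= k (coordinates 0..k-1).\<close>

definition vecs :: "nat \<Rightarrow> nat \<Rightarrow> (nat \<Rightarrow> nat) set" where
  "vecs n k = {m. (\<forall>i<k. m i < n) \<and> (\<forall>i\<ge>k. m i = 0)}"

definition grdh_keys :: "nat \<Rightarrow> nat \<Rightarrow> (nat \<Rightarrow> nat) \<Rightarrow> (nat \<Rightarrow> nat) set" where
  "grdh_keys n k t = {x \<in> vecs n k. \<forall>i<k. gcd (x i) n = t i}"

definition grdh_hash :: "nat \<Rightarrow> nat \<Rightarrow> (nat \<Rightarrow> nat) \<Rightarrow> (nat \<Rightarrow> nat) \<Rightarrow> nat" where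
  "grdh_hash n k x m = (\<Sum>i<k. m i * x i) mod n"

definition coll_prob :: "nat \<Rightarrow> nat \<Rightarrow> (nat \<Rightarrow> nat) \<Rightarrow> (nat \<Rightarrow> nat) \<Rightarrow> (nat \<Rightarrow> nat) \<Rightarrow> real" where
  "coll_prob n k t m m' =
     real (card {x \<in> grdh_keys n k t. grdh_hash n k x m = grdh_hash n k x m'})
     / real (card (grdh_keys n k t))"

definition almost_universal :: "nat \<Rightarrow> nat \<Rightarrow> (nat \<Rightarrow> nat) \<Rightarrow> real \<Rightarrow> bool" where
  "almost_universal n k t \<epsilon> \<longleftrightarrow>
     (\<forall>m \<in> vecs n k. \<forall>m' \<in> vecs n k. m \<noteq> m' \<longrightarrow> coll_prob n k t m m' \<le> \<epsilon>)"

end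

theory Submission
  imports Defs "HOL-Number_Theory.Number_Theory"
begin

text \<open>
  Two messages collide under the key \<open>x\<close> iff \<open>n\<close> divides \<open>\<Sum>i. (m\<^sub>i - m'\<^sub>i) x\<^sub>i\<close>.
  If some \<open>t\<^sub>j > 1\<close>, the message \<open>(n/t\<^sub>j) e\<^sub>j\<close> collides with \<open>0\<close> under every key; if \<open>n\<close> is
  even, so does \<open>(n/2)(e\<^sub>0 + e\<^sub>1)\<close>, because unit keys are then odd.

  For unit keys, let \<open>p\<close> be the least prime factor of \<open>n\<close> and \<open>m\<^sub>j \<noteq> m'\<^sub>j\<close>. Every
  \<open>r \<in> {1..p-1}\<close> is a unit mod \<open>n\<close>, and \<open>(r, x) \<mapsto> x[x\<^sub>j := r x\<^sub>j]\<close> maps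
  \<open>{1..p-1} \<times> colliding keys\<close> injectively into all keys: two colliding keys that agree off
  \<open>j\<close> agree at \<open>j\<close> modulo a prime \<open>q \<ge> p\<close> dividing \<open>n\<close>, which forces equal multipliers. Hence
  at most a fraction \<open>1/(p-1)\<close> of the keys collide. For \<open>m = (n/p) e\<^sub>0\<close> and
  \<open>m' = (n/p) e\<^sub>1\<close> the colliding keys are those with \<open>x\<^sub>0 \<equiv> x\<^sub>1 (mod p)\<close>, and the same map is
  onto, so the bound is attained.
\<close>

lemma finite_vecs: "finite (vecs n k)"
proof -
  have "finite {f. \<forall>i. (i \<in> {..<k} \<longrightarrow> f i \<in> {..<n}) \<and> (i \<notin> {..<k} \<longrightarrow> f i = (0::nat))}"
    by (rule finite_set_of_finite_funs) simp_all
  then show ?thesis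
    by (rule finite_subset[rotated]) (auto simp: vecs_def)
qed

lemma finite_grdh_keys: "finite (grdh_keys n k t)"
  using finite_vecs unfolding grdh_keys_def by simp

lemma grdh_keys_nonempty:
  assumes "n > 0" and "\<forall>i<k. t i dvd n"
  shows "grdh_keys n k t \<noteq> {}"
proof -
  define x where "x = (\<lambda>i. if i < k then t i mod n else 0)"
  have "x i < n \<and> gcd (x i) n = t i" if "i < k" for i
    using assms that by (simp add: x_def gcd.commute[of _ n] gcd_red_nat[symmetric] gcd_nat.absorb2)
  then have "x \<in> grdh_keys n k t"
    by (simp add: grdh_keys_def vecs_def x_def)
  then show ?thesis by blast
qed

lemma grdh_keys_cong:
  assumes "\<forall>i<k. t i = t' i"
  shows "grdh_keys n k t = grdh_keys n k t'"
  using assms by (auto simp: grdh_keys_def)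

lemma almost_universal_cong:
  assumes "\<forall>i<k. t i = t' i"
  shows "almost_universal n k t = almost_universal n k t'"
  using grdh_keys_cong[OF assms] by (intro ext) (simp add: almost_universal_def coll_prob_def)

lemma coll_prob_cong:
  assumes "\<forall>i<k. t i = t' i"
  shows "coll_prob n k t = coll_prob n k t'"
  using grdh_keys_cong[OF assms] by (intro ext) (simp add: coll_prob_def)

lemma grdh_keys_units_iff:
  "x \<in> grdh_keys n k (\<lambda>_. 1) \<longleftrightarrow> x \<in> vecs n k \<and> (\<forall>i<k. coprime (x i) n)"
  by (simp only: grdh_keys_def coprime_iff_gcd_eq_1 mem_Collect_eq)

definition collision_keys ::
    "nat \<Rightarrow> nat \<Rightarrow> (nat \<Rightarrow> nat) \<Rightarrow> (nat \<Rightarrow> nat) \<Rightarrow> (nat \<Rightarrow> nat) \<Rightarrow> (nat \<Rightarrow> nat) set" where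
  "collision_keys n k t m m' = {x \<in> grdh_keys n k t. grdh_hash n k x m = grdh_hash n k x m'}"

lemma coll_prob_eq_card_ratio:
  "coll_prob n k t m m' = real (card (collision_keys n k t m m')) / real (card (grdh_keys n k t))"
  by (simp add: coll_prob_def collision_keys_def)

lemma coll_prob_eq_1:
  assumes "n > 0" and "\<forall>i<k. t i dvd n"
    and "\<forall>x\<in>grdh_keys n k t. grdh_hash n k x m = grdh_hash n k x m'"
  shows "coll_prob n k t m m' = 1"
proof -
  have "card (grdh_keys n k t) > 0"
    using grdh_keys_nonempty[OF assms(1,2)] finite_grdh_keys by (simp add: card_gt_0_iff)
  moreover have "collision_keys n k t m m' = grdh_keys n k t"
    using assms(3) by (auto simp: collision_keys_def)
  ultimately show ?thesis
    by (simp add: coll_prob_eq_card_ratio)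
qed

lemma not_almost_universal_if_always_collide:
  assumes "n > 0" and "\<forall>i<k. t i dvd n" and "m \<in> vecs n k" "m' \<in> vecs n k" "m \<noteq> m'"
    and "\<forall>x\<in>grdh_keys n k t. grdh_hash n k x m = grdh_hash n k x m'"
    and "\<epsilon> < 1"
  shows "\<not> almost_universal n k t \<epsilon>"
proof
  assume "almost_universal n k t \<epsilon>"
  then have "coll_prob n k t m m' \<le> \<epsilon>"
    using assms(3-5) by (simp add: almost_universal_def)
  then show False
    using coll_prob_eq_1[OF assms(1,2,6)] assms(7) by simp
qed

lemma grdh_hash_indicator:
  assumes "S \<subseteq> {..<k}"
  shows "grdh_hash n k x (\<lambda>i. if i \<in> S then c else 0) = c * (\<Sum>i\<in>S. x i) mod n"
proof -
  have "(\<Sum>i<k. (if i \<in> S then c else 0) * x i) = (\<Sum>i<k. if i \<in> S then c * x i else 0)"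
    by (intro sum.cong) auto
  also have "\<dots> = (\<Sum>i\<in>S. c * x i)"
    using assms by (simp add: sum.inter_restrict[symmetric] Int_absorb1 lessThan_def)
  finally have "(\<Sum>i<k. (if i \<in> S then c else 0) * x i) = (\<Sum>i\<in>S. c * x i)" .
  then show ?thesis
    by (simp add: grdh_hash_def sum_distrib_left)
qed

lemma grdh_hash_zero: "grdh_hash n k x (\<lambda>_. 0) = 0"
  by (simp add: grdh_hash_def)

lemma indicator_in_vecs:
  assumes "S \<subseteq> {..<k}" and "c < n"
  shows "(\<lambda>i. if i \<in> S then c else 0) \<in> vecs n k"
  using assms by (auto simp: vecs_def)

lemma always_collide_if_nonunit_gcd:
  assumes "n > 1" and "j < k" and "t j dvd n" and "t j \<noteq> 1"
  obtains m m' where "m \<in> vecs n k" "m' \<in> vecs n k" "m \<noteq> m'"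
    "\<forall>x\<in>grdh_keys n k t. grdh_hash n k x m = grdh_hash n k x m'"
proof
  define c where "c = n div t j"
  have n_eq: "n = c * t j"
    using assms(3) by (simp add: c_def)
  have "t j > 1"
    using assms(1,3,4) by (cases "t j") auto
  have "0 < c"
    using n_eq assms(1) by (cases c) auto
  then have "c < n"
    using n_eq \<open>t j > 1\<close> by simp
  show "(\<lambda>i. if i \<in> {j} then c else 0) \<in> vecs n k" "(\<lambda>_. 0) \<in> vecs n k"
    using indicator_in_vecs[of "{j}" k c n] assms(1,2) \<open>c < n\<close> by (simp_all add: vecs_def)
  show "(\<lambda>i. if i \<in> {j} then c else 0) \<noteq> (\<lambda>_. 0)"
  proof
    assume "(\<lambda>i. if i \<in> {j} then c else 0) = (\<lambda>_. 0)"
    from fun_cong[OF this, of j] show False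
      using \<open>0 < c\<close> by simp
  qed
  show "\<forall>x\<in>grdh_keys n k t. grdh_hash n k x (\<lambda>i. if i \<in> {j} then c else 0) = grdh_hash n k x (\<lambda>_. 0)"
  proof
    fix x assume "x \<in> grdh_keys n k t"
    then have "gcd (x j) n = t j"
      using assms(2) by (simp add: grdh_keys_def)
    then have "t j dvd x j"
      by (metis gcd_dvd1)
    then have "n dvd c * x j"
      by (simp add: n_eq)
    then show "grdh_hash n k x (\<lambda>i. if i \<in> {j} then c else 0) = grdh_hash n k x (\<lambda>_. 0)"
      using assms(2) grdh_hash_indicator[of "{j}" k n x c] by (simp add: grdh_hash_zero)
  qed
qed

lemma always_collide_if_even:
  assumes "n > 1" and "even n" and "k > 1" and "odd (t 0)" "odd (t 1)"
  obtains m m' where "m \<in> vecs n k" "m' \<in> vecs n k" "m \<noteq> m'"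
    "\<forall>x\<in>grdh_keys n k t. grdh_hash n k x m = grdh_hash n k x m'"
proof
  define c where "c = n div 2"
  have n_eq: "n = c * 2" and "0 < c" "c < n"
    using assms(1,2) by (auto simp: c_def)
  show "(\<lambda>i. if i \<in> {0, 1} then c else 0) \<in> vecs n k" "(\<lambda>_. 0) \<in> vecs n k"
    using indicator_in_vecs[of "{0, 1}" k c n] assms(1,3) \<open>c < n\<close> by (simp_all add: vecs_def)
  show "(\<lambda>i. if i \<in> {0, 1} then c else 0) \<noteq> (\<lambda>_. 0)"
  proof
    assume "(\<lambda>i. if i \<in> {0, 1} then c else 0) = (\<lambda>_. 0)"
    from fun_cong[OF this, of 0] show False
      using \<open>0 < c\<close> by simp
  qed
  show "\<forall>x\<in>grdh_keys n k t. grdh_hash n k x (\<lambda>i. if i \<in> {0, 1} then c else 0) = grdh_hash n k x (\<lambda>_. 0)"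
  proof
    fix x assume x: "x \<in> grdh_keys n k t"
    have "odd (x i)" if "i < k" "odd (t i)" for i
    proof
      assume "even (x i)"
      then have "2 dvd gcd (x i) n"
        using assms(2) by simp
      moreover have "gcd (x i) n = t i"
        using x that(1) by (simp add: grdh_keys_def)
      ultimately show False
        using that(2) by simp
    qed
    then have "even (x 0 + x 1)"
      using assms(3-5) by simp
    then have "n dvd c * (x 0 + x 1)"
      by (simp add: n_eq)
    then show "grdh_hash n k x (\<lambda>i. if i \<in> {0, 1} then c else 0) = grdh_hash n k x (\<lambda>_. 0)"
      using assms(3) grdh_hash_indicator[of "{0, 1}" k n x c] by (simp add: grdh_hash_zero)
  qed
qed

lemma grdh_hash_eq_iff_dvd:
  "grdh_hash n k x m = grdh_hash n k x m' \<longleftrightarrow>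
   int n dvd (\<Sum>i<k. (int (m i) - int (m' i)) * int (x i))"
proof -
  have "grdh_hash n k x m = grdh_hash n k x m' \<longleftrightarrow>
      [int (\<Sum>i<k. m i * x i) = int (\<Sum>i<k. m' i * x i)] (mod int n)"
    unfolding cong_int_iff by (simp only: grdh_hash_def cong_def)
  also have "\<dots> \<longleftrightarrow> int n dvd (\<Sum>i<k. (int (m i) - int (m' i)) * int (x i))"
    by (simp add: cong_iff_dvd_diff sum_subtractf[symmetric] left_diff_distrib)
  finally show ?thesis .
qed

lemma collisions_agreeing_off_coordinate:
  assumes "grdh_hash n k x m = grdh_hash n k x m'" and "grdh_hash n k y m = grdh_hash n k y m'"
    and "j < k" and "\<forall>i. i \<noteq> j \<longrightarrow> x i = y i"
  shows "int n dvd (int (m j) - int (m' j)) * (int (x j) - int (y j))"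
proof -
  have "int n dvd (\<Sum>i<k. (int (m i) - int (m' i)) * int (x i)) - (\<Sum>i<k. (int (m i) - int (m' i)) * int (y i))"
    using assms(1,2) unfolding grdh_hash_eq_iff_dvd by (rule dvd_diff)
  also have "\<dots> = (\<Sum>i<k. (int (m i) - int (m' i)) * (int (x i) - int (y i)))"
    by (simp add: sum_subtractf[symmetric] right_diff_distrib)
  also have "\<dots> = (\<Sum>i\<in>{j}. (int (m i) - int (m' i)) * (int (x i) - int (y i)))"
    using assms(3,4) by (intro sum.mono_neutral_right) auto
  finally show ?thesis
    by simp
qed

lemma prime_factor_dvd_annihilator:
  fixes d :: int
  assumes "n > 0" and "\<not> int n dvd d"
  obtains q where "prime q" "q dvd n" "\<And>z. int n dvd d * z \<Longrightarrow> int q dvd z"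
proof -
  define g where "g = gcd d (int n)"
  define n' where "n' = int n div g"
  define d' where "d' = d div g"
  have "g > 0"
    using assms(1) by (simp add: g_def)
  have n_eq: "int n = n' * g" and d_eq: "d = d' * g"
    by (simp_all add: n'_def d'_def g_def)
  have "coprime n' d'"
    unfolding n'_def d'_def g_def using assms(1) div_gcd_coprime[of d "int n"]
    by (simp add: coprime_commute)
  have "n' \<noteq> 1"
    using assms(2) n_eq d_eq by auto
  moreover have "0 < n' * g"
    using assms(1) n_eq by (metis of_nat_0_less_iff)
  then have "n' > 0"
    using \<open>g > 0\<close> by (simp add: zero_less_mult_iff)
  ultimately obtain q' where q': "prime q'" "q' dvd n'"
    using prime_divisor_exists[of n'] by auto
  then have "q' \<ge> 0" "q' dvd int n"
    using n_eq by (simp_all add: prime_ge_0_int)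
  show ?thesis
  proof
    show "prime (nat q')"
      using q'(1) by simp
    show "nat q' dvd n"
      using \<open>q' \<ge> 0\<close> \<open>q' dvd int n\<close> by (metis int_dvd_int_iff nat_0_le)
    fix z assume "int n dvd d * z"
    then have "n' * g dvd (d' * z) * g"
      by (simp add: n_eq d_eq ac_simps)
    then have "n' dvd d' * z"
      using \<open>g > 0\<close> by simp
    then have "n' dvd z"
      using \<open>coprime n' d'\<close> by (simp add: coprime_dvd_mult_right_iff)
    then show "int (nat q') dvd z"
      using q'(2) \<open>q' \<ge> 0\<close> by (simp add: dvd_trans)
  qed
qed

lemma coprime_if_less_prime_factors:
  fixes r n :: nat
  assumes "0 < r" and "r < p" and "\<forall>q. prime q \<and> q dvd n \<longrightarrow> p \<le> q"
  shows "coprime r n"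
proof (rule coprimeI)
  fix q assume "q dvd r" "q dvd n"
  show "is_unit q"
  proof (rule ccontr)
    assume "\<not> is_unit q"
    then obtain q' where "prime q'" "q' dvd q"
      using \<open>q dvd r\<close> assms(1) prime_divisor_exists[of q] by fastforce
    then have "p \<le> q'" "q' \<le> r"
      using assms \<open>q dvd r\<close> \<open>q dvd n\<close> by (auto intro: dvd_trans dvd_imp_le)
    then show False
      using assms(2) by simp
  qed
qed

definition scale_coord :: "nat \<Rightarrow> nat \<Rightarrow> nat \<times> (nat \<Rightarrow> nat) \<Rightarrow> nat \<Rightarrow> nat" where
  "scale_coord n j = (\<lambda>(r, x). x(j := r * x j mod n))"

lemma scale_coord_in_grdh_keys_units:
  assumes "n > 1" and "coprime r n" and "x \<in> grdh_keys n k (\<lambda>_. 1)"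
  shows "scale_coord n j (r, x) \<in> grdh_keys n k (\<lambda>_. 1)"
  using assms unfolding grdh_keys_units_iff scale_coord_def by (auto simp: vecs_def)

lemma scale_coord_image_subset:
  assumes "n > 1" and "A \<subseteq> grdh_keys n k (\<lambda>_. 1)"
    and least: "\<forall>q. prime q \<and> q dvd n \<longrightarrow> p \<le> q"
  shows "scale_coord n j ` ({1..<p} \<times> A) \<subseteq> grdh_keys n k (\<lambda>_. 1)"
proof clarify
  fix r x assume "r \<in> {1..<p}" "x \<in> A"
  then show "scale_coord n j (r, x) \<in> grdh_keys n k (\<lambda>_. 1)"
    using assms(2) coprime_if_less_prime_factors[OF _ _ least]
    by (intro scale_coord_in_grdh_keys_units[OF assms(1)]) auto
qed

lemma collisions_cong_mod_prime_factor:
  assumes "n > 1" and "j < k" and "m \<in> vecs n k" "m' \<in> vecs n k" "m j \<noteq> m' j"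
  obtains q where "prime q" "q dvd n"
    "\<And>x y. grdh_hash n k x m = grdh_hash n k x m' \<Longrightarrow> grdh_hash n k y m = grdh_hash n k y m'
      \<Longrightarrow> \<forall>i. i \<noteq> j \<longrightarrow> x i = y i \<Longrightarrow> [x j = y j] (mod q)"
proof -
  have "m j < n" "m' j < n"
    using assms(2-4) by (auto simp: vecs_def)
  then have "\<not> int n dvd int (m j) - int (m' j)"
    using assms(5) dvd_imp_le_int[of "int (m j) - int (m' j)" "int n"] by linarith
  moreover have "n > 0"
    using assms(1) by simp
  ultimately obtain q where q: "prime q" "q dvd n"
    and cancel: "\<And>z. int n dvd (int (m j) - int (m' j)) * z \<Longrightarrow> int q dvd z"
    using prime_factor_dvd_annihilator by metis
  show ?thesis
  proof (rule that[OF q])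
    fix x y
    assume "grdh_hash n k x m = grdh_hash n k x m'" "grdh_hash n k y m = grdh_hash n k y m'"
      and "\<forall>i. i \<noteq> j \<longrightarrow> x i = y i"
    then have "int q dvd int (x j) - int (y j)"
      using cancel collisions_agreeing_off_coordinate assms(2) by blast
    then show "[x j = y j] (mod q)"
      by (metis cong_iff_dvd_diff cong_int_iff)
  qed
qed

lemma cong_multipliers_eq:
  fixes a b r s q n :: nat
  assumes "q dvd n" and "coprime a q" and "[r * a = s * b] (mod n)" and "[a = b] (mod q)"
    and "r < q" "s < q"
  shows "r = s"
proof -
  have "[r * a = s * b] (mod q)"
    using cong_dvd_modulus_nat[OF assms(3,1)] .
  moreover have "[s * b = s * a] (mod q)"
    using cong_scalar_left[OF cong_sym[OF assms(4)]] .
  ultimately have "[r * a = s * a] (mod q)"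
    by (rule cong_trans)
  then have "[r = s] (mod q)"
    using assms(2) by (simp add: cong_mult_rcancel_nat)
  then show ?thesis
    using assms(5,6) by (rule cong_less_modulus_unique_nat)
qed

lemma inj_on_scale_coord:
  assumes "n > 1" and "j < k" and "m \<in> vecs n k" "m' \<in> vecs n k" "m j \<noteq> m' j"
    and least: "\<forall>q. prime q \<and> q dvd n \<longrightarrow> p \<le> q"
  shows "inj_on (scale_coord n j) ({1..<p} \<times> collision_keys n k (\<lambda>_. 1) m m')"
    (is "inj_on _ ?D")
proof (rule inj_onI)
  fix a b
  assume a: "a \<in> ?D" and b: "b \<in> ?D" and eq: "scale_coord n j a = scale_coord n j b"
  obtain r x s y where ab: "a = (r, x)" "b = (s, y)"
    by (cases a, cases b)
  have r: "0 < r" "r < p" and s: "0 < s" "s < p"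
    using a b ab by auto
  have x: "x \<in> vecs n k" "coprime (x j) n" "grdh_hash n k x m = grdh_hash n k x m'"
    using a ab assms(2) unfolding collision_keys_def grdh_keys_units_iff by auto
  have y: "y \<in> vecs n k" "grdh_hash n k y m = grdh_hash n k y m'"
    using b ab unfolding collision_keys_def grdh_keys_units_iff by auto
  have off_j: "\<forall>i. i \<noteq> j \<longrightarrow> x i = y i"
    using eq ab by (metis (no_types, lifting) case_prod_conv fun_upd_other scale_coord_def)
  have at_j: "[r * x j = s * y j] (mod n)"
    using fun_cong[OF eq, of j] ab by (simp add: scale_coord_def cong_def)
  obtain q where q: "prime q" "q dvd n"
    and cong_q: "\<And>x y. grdh_hash n k x m = grdh_hash n k x m' \<Longrightarrow> grdh_hash n k y m = grdh_hash n k y m'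
      \<Longrightarrow> \<forall>i. i \<noteq> j \<longrightarrow> x i = y i \<Longrightarrow> [x j = y j] (mod q)"
    by (rule collisions_cong_mod_prime_factor[OF assms(1-5)]) (rule that)
  have "coprime (x j) q"
    using x(2) q(2) coprime_divisors dvd_refl by blast
  moreover have "p \<le> q"
    using least q by blast
  ultimately have "r = s"
    using cong_multipliers_eq[OF q(2) _ at_j cong_q[OF x(3) y(2) off_j]] r s by simp
  moreover have "coprime r n"
    using coprime_if_less_prime_factors r least by blast
  ultimately have "[x j = y j] (mod n)"
    using at_j by (simp add: cong_mult_lcancel_nat)
  then have "x j = y j"
    using x(1) y(1) assms(2) cong_less_modulus_unique_nat by (simp add: vecs_def)
  then show "a = b"
    using ab off_j \<open>r = s\<close> by (metis ext)
qed

lemma card_collision_keys_le: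
  assumes "n > 1" and "m \<in> vecs n k" "m' \<in> vecs n k" "m \<noteq> m'"
    and least: "\<forall>q. prime q \<and> q dvd n \<longrightarrow> p \<le> q"
  shows "(p - 1) * card (collision_keys n k (\<lambda>_. 1) m m') \<le> card (grdh_keys n k (\<lambda>_. 1))"
proof -
  let ?D = "{1..<p} \<times> collision_keys n k (\<lambda>_. 1) m m'"
  obtain j where j: "m j \<noteq> m' j"
    using assms(4) by blast
  have "j < k"
  proof (rule ccontr)
    assume "\<not> j < k"
    then have "m j = 0" "m' j = 0"
      using assms(2,3) by (simp_all add: vecs_def)
    with j show False
      by simp
  qed
  have "inj_on (scale_coord n j) ?D"
    using inj_on_scale_coord[OF assms(1) \<open>j < k\<close> assms(2,3) j least] .
  moreover have "scale_coord n j ` ?D \<subseteq> grdh_keys n k (\<lambda>_. 1)"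
    using scale_coord_image_subset[OF assms(1) _ least] by (simp add: collision_keys_def)
  ultimately have "card ?D \<le> card (grdh_keys n k (\<lambda>_. 1))"
    using finite_grdh_keys by (rule card_inj_on_le)
  then show ?thesis
    by (simp add: card_cartesian_product)
qed

lemma coll_prob_units_le:
  assumes "n > 1" and "p \<ge> 2" and "m \<in> vecs n k" "m' \<in> vecs n k" "m \<noteq> m'"
    and "\<forall>q. prime q \<and> q dvd n \<longrightarrow> p \<le> q"
  shows "coll_prob n k (\<lambda>_. 1) m m' \<le> 1 / (real p - 1)"
proof -
  let ?C = "card (collision_keys n k (\<lambda>_. 1) m m')" and ?K = "card (grdh_keys n k (\<lambda>_. 1))"
  have "real ((p - 1) * ?C) \<le> real ?K"
    using card_collision_keys_le[OF assms(1,3-6)] by (simp only: of_nat_le_iff)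
  then have "(real p - 1) * real ?C \<le> real ?K"
    using assms(2) by (simp add: of_nat_diff)
  moreover have "?K > 0"
    using grdh_keys_nonempty[of n k "\<lambda>_. 1"] assms(1) finite_grdh_keys by (simp add: card_gt_0_iff)
  moreover have "real p - 1 > 0"
    using assms(2) by simp
  ultimately show ?thesis
    unfolding coll_prob_eq_card_ratio by (simp add: field_simps)
qed

lemma exists_multiplier_mod_prime:
  fixes a b p :: nat
  assumes "prime p" and "coprime a p" "coprime b p"
  obtains r where "0 < r" "r < p" "[r * b = a] (mod p)"
proof -
  obtain u where u: "[b * u = 1] (mod p)"
    using cong_solve_coprime_nat[OF assms(3)] by auto
  define r where "r = a * u mod p"
  have "[r * b = a * (b * u)] (mod p)"
    unfolding r_def cong_def by (simp add: mod_mult_right_eq mult.left_commute mult.commute)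
  also have "[a * (b * u) = a] (mod p)"
    using cong_scalar_left[OF u, of a] by simp
  finally have rb: "[r * b = a] (mod p)" .
  have "r \<noteq> 0"
  proof
    assume "r = 0"
    then have "[a = 0] (mod p)"
      using rb by (simp add: cong_sym_eq)
    then have "p dvd a"
      by (simp add: cong_0_iff)
    then show False
      using coprime_common_divisor[OF assms(2) _ dvd_refl] assms(1) not_prime_unit by blast
  qed
  moreover have "r < p"
    using assms(1) by (simp add: r_def prime_gt_0_nat)
  ultimately show ?thesis
    using that rb by blast
qed

lemma grdh_keys_units_subset_scale_coord_image:
  assumes "n > 1" and "k > 1" and "prime p" "p dvd n"
    and least: "\<forall>q. prime q \<and> q dvd n \<longrightarrow> p \<le> q"
  shows "grdh_keys n k (\<lambda>_. 1)
    \<subseteq> scale_coord n 0 ` ({1..<p} \<times> {y \<in> grdh_keys n k (\<lambda>_. 1). [y 0 = y 1] (mod p)})"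
proof
  fix x assume x: "x \<in> grdh_keys n k (\<lambda>_. 1)"
  then have "coprime (x 0) n" "coprime (x 1) n" "x 0 < n"
    using assms(2) unfolding grdh_keys_units_iff vecs_def by auto
  then have "coprime (x 0) p" "coprime (x 1) p"
    using coprime_divisors[OF dvd_refl assms(4)] by blast+
  then obtain r where r: "0 < r" "r < p" "[r * x 1 = x 0] (mod p)"
    using exists_multiplier_mod_prime[OF assms(3)] by metis
  then have "coprime r n"
    using coprime_if_less_prime_factors[OF _ _ least] by blast
  then obtain w where w: "[r * w = 1] (mod n)"
    using cong_solve_coprime_nat by auto
  define y where "y = x(0 := w * x 0 mod n)"
  have "[w * r = Suc 0] (mod n)"
    using w by (simp add: mult.commute)
  then have "coprime w n"
    by (auto simp: coprime_iff_invertible_nat)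
  then have "y \<in> grdh_keys n k (\<lambda>_. 1)"
    using x assms(1) \<open>coprime (x 0) n\<close> unfolding grdh_keys_units_iff by (auto simp: vecs_def y_def)
  moreover have "[y 0 = y 1] (mod p)"
  proof -
    have "[r * w = 1] (mod p)"
      using cong_dvd_modulus_nat[OF w assms(4)] .
    then have "[w * (r * x 1) = x 1] (mod p)"
      using cong_scalar_right[of "r * w" 1 p "x 1"] by (simp add: ac_simps)
    then have "[w * x 0 = x 1] (mod p)"
      using cong_scalar_left[OF r(3), of w] by (meson cong_sym cong_trans)
    then show ?thesis
      using assms(4) by (simp add: y_def cong_def mod_mod_cancel)
  qed
  moreover have "scale_coord n 0 (r, y) = x"
  proof -
    have "[r * (w * x 0) = x 0] (mod n)"
      using cong_scalar_right[OF w, of "x 0"] by (simp add: ac_simps)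
    then have "r * (w * x 0 mod n) mod n = x 0"
      using \<open>x 0 < n\<close> by (simp add: cong_def mod_mult_right_eq)
    then show ?thesis
      by (auto simp: scale_coord_def y_def)
  qed
  ultimately show "x \<in> scale_coord n 0 ` ({1..<p} \<times> {y \<in> grdh_keys n k (\<lambda>_. 1). [y 0 = y 1] (mod p)})"
    using r(1,2) by force
qed

lemma card_grdh_keys_units_eq:
  assumes "n > 1" and "k > 1" and "prime p" "p dvd n"
    and least: "\<forall>q. prime q \<and> q dvd n \<longrightarrow> p \<le> q"
    and "m \<in> vecs n k" "m' \<in> vecs n k" "m 0 \<noteq> m' 0"
    and C_eq: "collision_keys n k (\<lambda>_. 1) m m' = {y \<in> grdh_keys n k (\<lambda>_. 1). [y 0 = y 1] (mod p)}"
  shows "card (grdh_keys n k (\<lambda>_. 1)) = (p - 1) * card (collision_keys n k (\<lambda>_. 1) m m')"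
proof -
  let ?K = "grdh_keys n k (\<lambda>_. 1)" and ?C = "collision_keys n k (\<lambda>_. 1) m m'"
  have "0 < k"
    using assms(2) by simp
  have "inj_on (scale_coord n 0) ({1..<p} \<times> ?C)"
    using inj_on_scale_coord[OF assms(1) \<open>0 < k\<close> assms(6-8) least] .
  moreover have "scale_coord n 0 ` ({1..<p} \<times> ?C) = ?K"
  proof
    show "scale_coord n 0 ` ({1..<p} \<times> ?C) \<subseteq> ?K"
      using scale_coord_image_subset[OF assms(1) _ least] by (simp add: collision_keys_def)
    show "?K \<subseteq> scale_coord n 0 ` ({1..<p} \<times> ?C)"
      using grdh_keys_units_subset_scale_coord_image[OF assms(1-5)] by (simp only: C_eq)
  qed
  ultimately have "bij_betw (scale_coord n 0) ({1..<p} \<times> ?C) ?K"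
    by (rule bij_betw_imageI)
  then have "card ({1..<p} \<times> ?C) = card ?K"
    by (rule bij_betw_same_card)
  then show ?thesis
    by (simp add: card_cartesian_product)
qed

lemma coll_prob_units_attains_bound:
  assumes "n > 1" and "k > 1" and "prime p" "p dvd n"
    and least: "\<forall>q. prime q \<and> q dvd n \<longrightarrow> p \<le> q"
  shows "\<exists>m\<in>vecs n k. \<exists>m'\<in>vecs n k. m \<noteq> m' \<and> coll_prob n k (\<lambda>_. 1) m m' = 1 / (real p - 1)"
proof -
  define c where "c = n div p"
  define m :: "nat \<Rightarrow> nat" where "m = (\<lambda>i. if i \<in> {0} then c else 0)"
  define m' :: "nat \<Rightarrow> nat" where "m' = (\<lambda>i. if i \<in> {1} then c else 0)"
  let ?K = "grdh_keys n k (\<lambda>_. 1)" and ?C = "collision_keys n k (\<lambda>_. 1) m m'"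
  have n_eq: "n = c * p"
    using assms(4) by (simp add: c_def)
  have "0 < c"
    using n_eq assms(1) by (cases c) auto
  have "c < n"
    using n_eq prime_gt_1_nat[OF assms(3)] \<open>0 < c\<close> by simp
  have vecs: "m \<in> vecs n k" "m' \<in> vecs n k"
    unfolding m_def m'_def using assms(2) \<open>c < n\<close> by (intro indicator_in_vecs; simp)+
  have "m 0 \<noteq> m' 0"
    using \<open>0 < c\<close> by (simp add: m_def m'_def)
  have "grdh_hash n k y m = c * y 0 mod n" "grdh_hash n k y m' = c * y 1 mod n" for y
    unfolding m_def m'_def using grdh_hash_indicator[of "{0}" k n y c]
      grdh_hash_indicator[of "{1}" k n y c] assms(2) by simp_all
  then have "grdh_hash n k y m = grdh_hash n k y m' \<longleftrightarrow> [y 0 = y 1] (mod p)" for y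
    using \<open>0 < c\<close> by (simp add: n_eq mod_mult_mult1 cong_def)
  then have "?C = {y \<in> ?K. [y 0 = y 1] (mod p)}"
    by (auto simp: collision_keys_def)
  then have "card ?K = (p - 1) * card ?C"
    using card_grdh_keys_units_eq[OF assms vecs \<open>m 0 \<noteq> m' 0\<close>] by blast
  moreover have "card ?K > 0"
    using grdh_keys_nonempty[of n k "\<lambda>_. 1"] assms(1) finite_grdh_keys by (simp add: card_gt_0_iff)
  ultimately have "real (card ?K) = (real p - 1) * real (card ?C)" "card ?C > 0"
    using prime_gt_1_nat[OF assms(3)] by (simp_all add: of_nat_diff)
  then have "coll_prob n k (\<lambda>_. 1) m m' = 1 / (real p - 1)"
    by (simp add: coll_prob_eq_card_ratio)
  moreover have "m \<noteq> m'"
    using \<open>m 0 \<noteq> m' 0\<close> by auto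
  ultimately show ?thesis
    using vecs by blast
qed

lemma Min_prime_factors:
  fixes n :: nat
  assumes "n > 1"
  shows "prime (Min (prime_factors n))" "Min (prime_factors n) dvd n"
    and "\<forall>q. prime q \<and> q dvd n \<longrightarrow> Min (prime_factors n) \<le> q"
proof -
  obtain q where "prime q" "q dvd n"
    using prime_factor_nat[of n] assms by auto
  then have "q \<in> prime_factors n"
    using assms by (simp add: in_prime_factors_iff)
  then have "prime_factors n \<noteq> {}"
    by blast
  then have "Min (prime_factors n) \<in> prime_factors n"
    by simp
  then show "prime (Min (prime_factors n))" "Min (prime_factors n) dvd n"
    by (auto simp: in_prime_factors_iff)
  show "\<forall>q. prime q \<and> q dvd n \<longrightarrow> Min (prime_factors n) \<le> q"
    using assms by (simp add: in_prime_factors_iff)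
qed

lemma always_collide_unless_odd_and_units:
  assumes "n > 1" and "k > 1" and "\<forall>i<k. t i dvd n" and "\<not> (odd n \<and> (\<forall>i<k. t i = 1))"
  obtains m m' where "m \<in> vecs n k" "m' \<in> vecs n k" "m \<noteq> m'"
    "\<forall>x\<in>grdh_keys n k t. grdh_hash n k x m = grdh_hash n k x m'"
proof (cases "\<exists>j<k. t j \<noteq> 1")
  case True
  then obtain j where j: "j < k" "t j \<noteq> 1"
    by blast
  have "t j dvd n"
    using assms(3) j(1) by blast
  show ?thesis
    by (rule always_collide_if_nonunit_gcd[where t = t, OF assms(1) j(1) \<open>t j dvd n\<close> j(2)]) (rule that)
next
  case False
  then have "even n"
    using assms(4) by blast
  moreover have "odd (t 0)" "odd (t 1)"
    using False assms(2) by simp_all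
  ultimately show ?thesis
    by (rule always_collide_if_even[OF assms(1) _ assms(2)]) (rule that)
qed

theorem mainTheorem2:
  fixes n k :: nat and t :: "nat \<Rightarrow> nat"
  assumes "n > 1" and "k > 1"
    and "\<forall>i<k. t i > 0 \<and> t i dvd n"
  shows "((\<exists>\<epsilon><1. almost_universal n k t \<epsilon>) \<longleftrightarrow> (odd n \<and> (\<forall>i<k. t i = 1)))
    \<and> ((odd n \<and> (\<forall>i<k. t i = 1)) \<longrightarrow>
        (let p = Min (prime_factors n) in
          almost_universal n k t (1 / (real p - 1)) \<and>
          (\<exists>m \<in> vecs n k. \<exists>m' \<in> vecs n k. m \<noteq> m' \<and>
              coll_prob n k t m m' = 1 / (real p - 1))))"
proof -
  define p where "p = Min (prime_factors n)"
  have p: "prime p" "p dvd n" and least: "\<forall>q. prime q \<and> q dvd n \<longrightarrow> p \<le> q"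
    using Min_prime_factors[OF assms(1)] by (simp_all add: p_def)
  have "\<forall>i<k. t i dvd n"
    using assms(3) by blast
  have units: "almost_universal n k t (1 / (real p - 1)) \<and>
      (\<exists>m \<in> vecs n k. \<exists>m' \<in> vecs n k. m \<noteq> m' \<and> coll_prob n k t m m' = 1 / (real p - 1))"
    if "\<forall>i<k. t i = 1"
    unfolding almost_universal_cong[OF that] coll_prob_cong[OF that] almost_universal_def
    using coll_prob_units_le[OF assms(1) prime_ge_2_nat[OF p(1)] _ _ _ least]
      coll_prob_units_attains_bound[OF assms(1,2) p least] by blast
  have "\<not> almost_universal n k t \<epsilon>" if "\<epsilon> < 1" and bad: "\<not> (odd n \<and> (\<forall>i<k. t i = 1))" for \<epsilon>
  proof -
    obtain m m' where "m \<in> vecs n k" "m' \<in> vecs n k" "m \<noteq> m'"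
      "\<forall>x\<in>grdh_keys n k t. grdh_hash n k x m = grdh_hash n k x m'"
      by (rule always_collide_unless_odd_and_units[OF assms(1,2) \<open>\<forall>i<k. t i dvd n\<close> bad])
    then show ?thesis
      using not_almost_universal_if_always_collide[OF _ \<open>\<forall>i<k. t i dvd n\<close> _ _ _ _ that(1)] assms(1)
      by simp
  qed
  moreover have "1 / (real p - 1) < 1" if "odd n"
    using p that prime_ge_2_nat[OF p(1)] by (cases "p = 2") auto
  ultimately show ?thesis
    unfolding Let_def p_def[symmetric] using units by blast
qed

end
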